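(* Let $G$ be a nice graph with no two adjacent vertices of the same degree. If $\chi'_{qm}(G)=2$, then $\chi'_{qm\Sigma}(G)=2$.
   Context: All graphs are simple and finite. A $k$-edge-coloring of $G$ is any map $c:E(G)\to\{1,\dots,k\}$ (adjacent edges may share colors). It induces $\sigma_c(v)=\sum_{u\in N(v)}c(vu)$. The coloring is neighbor sum distinguishing (NSD) if $\sigma_c(u)\ne\sigma_c(v)$ for every edge $uv$. It is quasi-majority if every vertex $v$ is incident to at most $\lceil d(v)/2\rceil$ edges of each single color. $\chi'_{qm}(G)$ is the least $k$ such that $G$ has a quasi-majority $k$-edge-coloring, and $\chi'_{qm\Sigma}(G)$ the least $k$ such that $G$ has a $k$-edge-coloring that is both quasi-majority and NSD. A graph is nice if it has no connected component isomorphic to $K_2$. *)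

theory Defs
  imports Main
begin

definition simple_graph :: "'a set \<Rightarrow> 'a set set \<Rightarrow> bool" where
  "simple_graph V E \<longleftrightarrow> finite V \<and>
     (\<forall>e\<in>E. \<exists>u v. u \<noteq> v \<and> u \<in> V \<and> v \<in> V \<and> e = {u, v})"

definition nbrs :: "'a set set \<Rightarrow> 'a \<Rightarrow> 'a set" where
  "nbrs E v = {u. {v, u} \<in> E}"

definition deg :: "'a set set \<Rightarrow> 'a \<Rightarrow> nat" where
  "deg E v = card (nbrs E v)"

text \<open>Nice: no connected component isomorphic to K2, i.e. no edge both of whose
  endpoints have degree 1.\<close>
definition nice :: "'a set \<Rightarrow> 'a set set \<Rightarrow> bool" where
  "nice V E \<longleftrightarrow> \<not> (\<exists>u v. {u, v} \<in> E \<and> deg E u = 1 \<and> deg E v = 1)"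

definition edge_coloring :: "'a set set \<Rightarrow> nat \<Rightarrow> ('a set \<Rightarrow> nat) \<Rightarrow> bool" where
  "edge_coloring E k c \<longleftrightarrow> (\<forall>e\<in>E. c e \<in> {1..k})"

definition sigma :: "'a set set \<Rightarrow> ('a set \<Rightarrow> nat) \<Rightarrow> 'a \<Rightarrow> nat" where
  "sigma E c v = (\<Sum>u\<in>nbrs E v. c {v, u})"

definition nsd :: "'a set set \<Rightarrow> ('a set \<Rightarrow> nat) \<Rightarrow> bool" where
  "nsd E c \<longleftrightarrow> (\<forall>u v. {u, v} \<in> E \<longrightarrow> sigma E c u \<noteq> sigma E c v)"

text \<open>Quasi-majority: at most ceil(d(v)/2) = (d(v)+1) div 2 incident edges of each colour.\<close>
definition quasi_majority :: "'a set \<Rightarrow> 'a set set \<Rightarrow> ('a set \<Rightarrow> nat) \<Rightarrow> bool" where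
  "quasi_majority V E c \<longleftrightarrow>
     (\<forall>v\<in>V. \<forall>i. card {u \<in> nbrs E v. c {v, u} = i} \<le> (deg E v + 1) div 2)"

definition chi_qm :: "'a set \<Rightarrow> 'a set set \<Rightarrow> nat" where
  "chi_qm V E = (LEAST k. \<exists>c. edge_coloring E k c \<and> quasi_majority V E c)"

definition chi_qm_sigma :: "'a set \<Rightarrow> 'a set set \<Rightarrow> nat" where
  "chi_qm_sigma V E = (LEAST k. \<exists>c. edge_coloring E k c \<and> quasi_majority V E c \<and> nsd E c)"

end

theory Submission
  imports Defs
begin

text \<open>In a quasi-majority 2-edge-colouring a vertex of degree \<open>d\<close> has between \<open>\<lfloor>d/2\<rfloor>\<close>
  and \<open>\<lceil>d/2\<rceil>\<close> edges of colour 2, so \<open>\<sigma>(v) = d + #(colour-2 edges)\<close> lies within \<open>1/2\<close>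
  of \<open>3d/2\<close>. Hence \<open>\<sigma>(v)\<close> determines \<open>d(v)\<close>, and adjacent vertices, having distinct degrees,
  get distinct sums.\<close>

lemma simple_graph_finite_edges:
  assumes "simple_graph V E"
  shows "finite E"
proof -
  have "E \<subseteq> Pow V" using assms unfolding simple_graph_def by auto
  then show ?thesis using assms finite_subset unfolding simple_graph_def by blast
qed

lemma simple_graph_finite_nbrs:
  assumes "simple_graph V E"
  shows "finite (nbrs E v)"
proof -
  have "nbrs E v \<subseteq> V"
    using assms unfolding simple_graph_def nbrs_def by (auto simp: doubleton_eq_iff)
  then show ?thesis using assms finite_subset unfolding simple_graph_def by blast
qed

lemma quasi_majority_if_inj_on:
  assumes "simple_graph V E" and "inj_on c E"
  shows "quasi_majority V E c"
  unfolding quasi_majority_def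
proof (intro ballI allI)
  fix v i
  let ?S = "{u \<in> nbrs E v. c {v, u} = i}"
  have "x = y" if "x \<in> ?S" "y \<in> ?S" for x y
  proof -
    have "{v, x} = {v, y}"
      using that \<open>inj_on c E\<close> unfolding nbrs_def by (auto dest: inj_onD)
    then show "x = y" by (auto simp: doubleton_eq_iff)
  qed
  moreover have "finite ?S"
    using simple_graph_finite_nbrs[OF assms(1)] by simp
  ultimately have "card ?S \<le> 1" by (simp add: card_le_Suc0_iff_eq)
  moreover have "card ?S \<le> deg E v"
    unfolding deg_def by (rule card_mono[OF simple_graph_finite_nbrs[OF assms(1)]]) auto
  ultimately show "card ?S \<le> (deg E v + 1) div 2" by linarith
qed

text \<open>Needed because \<open>LEAST\<close> over an empty predicate is an unspecified value; an injective
  colouring witnesses that some quasi-majority colouring exists.\<close>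

lemma chi_qm_attained:
  assumes "simple_graph V E"
  shows "\<exists>c. edge_coloring E (chi_qm V E) c \<and> quasi_majority V E c"
proof -
  obtain g :: "'a set \<Rightarrow> nat" and n where g: "g ` E = {i. i < n}" "inj_on g E"
    using finite_imp_inj_to_nat_seg[OF simple_graph_finite_edges[OF assms]] by blast
  have "\<forall>e\<in>E. g e < n" using g(1) by blast
  then have "edge_coloring E n (\<lambda>e. g e + 1)"
    unfolding edge_coloring_def by auto
  moreover have "quasi_majority V E (\<lambda>e. g e + 1)"
    using quasi_majority_if_inj_on[OF assms] g(2) by (simp add: inj_on_def)
  ultimately have "\<exists>k c. edge_coloring E k c \<and> quasi_majority V E c" by blast
  then show ?thesis unfolding chi_qm_def by (rule LeastI_ex)
qed

lemma chi_qm_le: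
  assumes "edge_coloring E k c" and "quasi_majority V E c"
  shows "chi_qm V E \<le> k"
  unfolding chi_qm_def using assms by (blast intro: Least_le)

lemma two_valued_sum_bounds:
  fixes f :: "'b \<Rightarrow> nat"
  assumes "finite N" and "\<forall>w\<in>N. f w \<in> {1, 2}"
    and "\<forall>i. card {w \<in> N. f w = i} \<le> (card N + 1) div 2"
  shows "3 * card N \<le> 2 * sum f N + 1 \<and> 2 * sum f N \<le> 3 * card N + 1"
proof -
  define A1 where "A1 = {w \<in> N. f w = 1}"
  define A2 where "A2 = {w \<in> N. f w = 2}"
  have split: "N = A1 \<union> A2" "A1 \<inter> A2 = {}" "finite A1" "finite A2"
    using assms(1,2) unfolding A1_def A2_def by auto
  have "sum f N = sum f A1 + sum f A2"
    using split by (simp add: sum.union_disjoint)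
  also have "\<dots> = card A1 + 2 * card A2"
    unfolding A1_def A2_def by simp
  finally have "sum f N = card A1 + 2 * card A2" .
  moreover have "card N = card A1 + card A2"
    using split by (simp add: card_Un_disjoint)
  moreover have "card A1 \<le> (card N + 1) div 2" "card A2 \<le> (card N + 1) div 2"
    using assms(3) unfolding A1_def A2_def by auto
  ultimately show ?thesis by presburger
qed

lemma sigma_bounds_if_quasi_majority_2_coloring:
  assumes "simple_graph V E" "edge_coloring E 2 c" "quasi_majority V E c" "v \<in> V"
  shows "3 * deg E v \<le> 2 * sigma E c v + 1 \<and> 2 * sigma E c v \<le> 3 * deg E v + 1"
proof -
  have "\<forall>u\<in>nbrs E v. c {v, u} \<in> {1, 2}"
    using assms(2) unfolding edge_coloring_def nbrs_def by auto
  moreover have "\<forall>i. card {u \<in> nbrs E v. c {v, u} = i} \<le> (card (nbrs E v) + 1) div 2"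
    using assms(3,4) unfolding quasi_majority_def deg_def by auto
  ultimately show ?thesis
    unfolding sigma_def deg_def by (rule two_valued_sum_bounds[OF simple_graph_finite_nbrs[OF assms(1)]])
qed

lemma nsd_if_quasi_majority_2_coloring:
  assumes "simple_graph V E" "edge_coloring E 2 c" "quasi_majority V E c"
    and "\<forall>u v. {u, v} \<in> E \<longrightarrow> deg E u \<noteq> deg E v"
  shows "nsd E c"
  unfolding nsd_def
proof (intro allI impI)
  fix u v assume uv: "{u, v} \<in> E"
  then have "u \<in> V" "v \<in> V"
    using assms(1) unfolding simple_graph_def by (auto simp: doubleton_eq_iff)
  then have "3 * deg E u \<le> 2 * sigma E c u + 1" "2 * sigma E c u \<le> 3 * deg E u + 1"
    and "3 * deg E v \<le> 2 * sigma E c v + 1" "2 * sigma E c v \<le> 3 * deg E v + 1"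
    using sigma_bounds_if_quasi_majority_2_coloring[OF assms(1-3)] by auto
  moreover have "deg E u \<noteq> deg E v" using assms(4) uv by blast
  ultimately show "sigma E c u \<noteq> sigma E c v" by presburger
qed

theorem mainTheorem16:
  fixes V :: "'a set" and E :: "'a set set"
  assumes "simple_graph V E"
    and "nice V E"
    and "\<forall>u v. {u, v} \<in> E \<longrightarrow> deg E u \<noteq> deg E v"
    and "chi_qm V E = 2"
  shows "chi_qm_sigma V E = 2"
proof -
  obtain c where c: "edge_coloring E 2 c" "quasi_majority V E c"
    using chi_qm_attained[OF assms(1)] assms(4) by auto
  have "nsd E c"
    using nsd_if_quasi_majority_2_coloring[OF assms(1) c assms(3)] .
  show ?thesis
    unfolding chi_qm_sigma_def
  proof (rule Least_equality)
    show "\<exists>c. edge_coloring E 2 c \<and> quasi_majority V E c \<and> nsd E c"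
      using c \<open>nsd E c\<close> by blast
  next
    fix k assume "\<exists>c. edge_coloring E k c \<and> quasi_majority V E c \<and> nsd E c"
    then show "2 \<le> k" using chi_qm_le assms(4) by metis
  qed
qed

end
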